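(* Let $n\ge2$ and let $\mathcal{I}^{(k)}_{CCZ}$ be the set of channels $\rho\mapsto U\rho U^\dagger$ with $U=H^{\otimes n}DH^{\otimes n}$, where $D$ is a product of gates from $\{Z,CZ,CCZ\}$ (acting on arbitrary qubits) containing at most $k$ $CCZ$ gates. There is an absolute constant $C$ such that for every sample $S=(z_1,\ldots,z_m)$ with $z_i\in\mathbb{F}_2^n\times\mathbb{F}_2^n$, \[ \hat{R}_S(\mathcal{F}(\mathcal{I}^{(k)}_{CCZ}))\le\frac{C\,(n^2+k\log n)^{1/2}}{\sqrt m}\max_{\Phi\in\mathcal{I}^{(k)}_{CCZ}}\|\vec f_\Phi\|_\infty . \]
   Context: $H$ is the Hadamard gate, $Z=\mathrm{diag}(1,-1)$, $CZ$ the controlled-$Z$ gate, $CCZ$ the doubly controlled-$Z$ gate on three qubits. For a channel $\Phi$ on $n$ qubits, $f_\Phi(x,y)=\mathrm{Tr}[\Phi(|x\rangle\langle x|)\,|y\rangle\langle y|]$ for $x,y\in\mathbb{F}_2^n$; $\mathcal{F}(\Omega)=\{f_\Phi:\Phi\in\Omega\}$; $\vec f_\Phi=(f_\Phi(z_1),\ldots,f_\Phi(z_m))$. Empirical Rademacher complexity: $\hat{R}_S(\mathcal{G})=\mathbb{E}_{\epsilon}[\sup_{g\in\mathcal{G}}\frac1m\sum_i\epsilon_i g(z_i)]$, $\epsilon_i$ i.i.d. uniform on $\{\pm1\}$. *)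

theory Defs
  imports Complex_Main
begin

text \<open>Bit strings of length n represent F_2^n; matrices on n qubits are functions
  on pairs of bit strings (indices restricted to length-n strings).\<close>

definition bv :: "nat \<Rightarrow> bool list set" where
  "bv n = {xs. length xs = n}"

type_synonym cmat = "bool list \<Rightarrow> bool list \<Rightarrow> complex"
type_synonym channel = "cmat \<Rightarrow> cmat"

definition mmult :: "nat \<Rightarrow> cmat \<Rightarrow> cmat \<Rightarrow> cmat" where
  "mmult n A B = (\<lambda>x y. \<Sum>z\<in>bv n. A x z * B z y)"

definition madj :: "cmat \<Rightarrow> cmat" where
  "madj A = (\<lambda>x y. cnj (A y x))"

definition mtrace :: "nat \<Rightarrow> cmat \<Rightarrow> complex" where
  "mtrace n A = (\<Sum>x\<in>bv n. A x x)"

definition ketbra :: "bool list \<Rightarrow> cmat" where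
  "ketbra x = (\<lambda>a b. if a = x \<and> b = x then 1 else 0)"

definition diag_mat :: "(bool list \<Rightarrow> complex) \<Rightarrow> cmat" where
  "diag_mat d = (\<lambda>a b. if a = b then d a else 0)"

definition dotF2 :: "bool list \<Rightarrow> bool list \<Rightarrow> bool" where
  "dotF2 x y = odd (length (filter (\<lambda>(a,b). a \<and> b) (zip x y)))"

definition hadamard_n :: "nat \<Rightarrow> cmat" where
  "hadamard_n n = (\<lambda>x y. complex_of_real (1 / sqrt (2 ^ n)) * (if dotF2 x y then -1 else 1))"

datatype gate = Zg nat | CZg nat nat | CCZg nat nat nat

fun valid_gate :: "nat \<Rightarrow> gate \<Rightarrow> bool" where
  "valid_gate n (Zg i) = (i < n)"
| "valid_gate n (CZg i j) = (i < n \<and> j < n \<and> i \<noteq> j)"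
| "valid_gate n (CCZg i j l) = (i < n \<and> j < n \<and> l < n \<and> distinct [i, j, l])"

fun is_CCZ :: "gate \<Rightarrow> bool" where
  "is_CCZ (CCZg _ _ _) = True"
| "is_CCZ _ = False"

fun gate_phase :: "gate \<Rightarrow> bool list \<Rightarrow> bool" where
  "gate_phase (Zg i) z = z ! i"
| "gate_phase (CZg i j) z = (z ! i \<and> z ! j)"
| "gate_phase (CCZg i j l) z = (z ! i \<and> z ! j \<and> z ! l)"

definition gate_mat :: "gate \<Rightarrow> cmat" where
  "gate_mat g = diag_mat (\<lambda>z. if gate_phase g z then -1 else 1)"

definition circuit_mat :: "nat \<Rightarrow> gate list \<Rightarrow> cmat" where
  "circuit_mat n gs = foldr (mmult n) (map gate_mat gs) (diag_mat (\<lambda>_. 1))"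

definition unitary_channel :: "nat \<Rightarrow> cmat \<Rightarrow> channel" where
  "unitary_channel n U = (\<lambda>\<rho>. mmult n (mmult n U \<rho>) (madj U))"

definition I_CCZ :: "nat \<Rightarrow> nat \<Rightarrow> channel set" where
  "I_CCZ n k = {unitary_channel n (mmult n (mmult n (hadamard_n n) (circuit_mat n gs)) (hadamard_n n))
     | gs. (\<forall>g\<in>set gs. valid_gate n g) \<and> length (filter is_CCZ gs) \<le> k}"

text \<open>f_Phi(x,y) = Tr[Phi(|x><x|) |y><y|] (real-valued; we take the real part).\<close>
definition f_chan :: "nat \<Rightarrow> channel \<Rightarrow> bool list \<times> bool list \<Rightarrow> real" where
  "f_chan n \<Phi> = (\<lambda>(x, y). Re (mtrace n (mmult n (\<Phi> (ketbra x)) (ketbra y))))"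

definition F_class :: "nat \<Rightarrow> channel set \<Rightarrow> (bool list \<times> bool list \<Rightarrow> real) set" where
  "F_class n \<Omega> = f_chan n ` \<Omega>"

definition emp_rademacher :: "('z \<Rightarrow> real) set \<Rightarrow> 'z list \<Rightarrow> real" where
  "emp_rademacher G S =
     (\<Sum>\<epsilon>\<in>{\<epsilon> :: real list. length \<epsilon> = length S \<and> set \<epsilon> \<subseteq> {-1, 1}}.
        (SUP g\<in>G. (\<Sum>i<length S. \<epsilon> ! i * g (S ! i)) / real (length S))) / 2 ^ length S"

end

theory Submission
  imports Defs "HOL-Probability.Hoeffding"
begin

text \<open>Every channel in I_CCZ n k is conjugation by H D H with D a diagonal sign matrix. The
  diagonal gates commute and square to the identity, so D only depends on the set of gates used an
  odd number of times: an arbitrary subset of the at most n + n^2 gates Z and CZ, together with at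
  most k of the at most n^3 gates CCZ. Hence the function class has at most
  2^(n + n^2) (n^3 + 1)^k elements, and the logarithm of that is at most 4 (n^2 + k ln n).
  Massart's finite class lemma, R \<le> M sqrt (2 ln N) / sqrt m, then gives the bound with C = 3.
  Massart's lemma follows by bounding the supremum over the class by the soft-max
  ln (\<Sum>g. exp (l X g)) / l, moving the average over the signs inside the logarithm (Jensen),
  bounding each sign's contribution by cosh x \<le> exp (x^2 / 2), and optimising over l.\<close>

lemma cosh_le_exp_half_square: "cosh (x::real) \<le> exp (x\<^sup>2 / 2)"
proof -
  have nonneg: "cosh x \<le> exp (x\<^sup>2 / 2)" if "x \<ge> 0" for x :: real
  proof -
    have "exp x * exp (-x) = 1"
      by (simp add: exp_minus)
    then have "1 + 1/2 * (exp (2*x) - 1) = exp x * cosh x"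
      unfolding cosh_field_def mult_2 exp_add by (simp add: algebra_simps add_divide_distrib)
    then have "ln (1 + 1/2 * (exp (2*x) - 1)) = x + ln (cosh x)"
      by (simp add: ln_mult)
    \<comment> \<open>Hoeffding's lemma for a fair coin with values \<open>-x\<close> and \<open>x\<close>\<close>
    moreover have "-(2*x) * (1/2) + ln (1 + 1/2 * (exp (2*x) - 1)) \<le> (2*x)\<^sup>2 / 8"
      using Hoeffdings_lemma_aux[of "2*x" "1/2"] that by simp
    ultimately have "ln (cosh x) \<le> x\<^sup>2 / 2"
      by (simp add: power2_eq_square)
    then show ?thesis
      by (metis cosh_real_pos exp_le_cancel_iff exp_ln)
  qed
  show ?thesis
    using nonneg[of x] nonneg[of "-x"] by (cases "x \<ge> 0") simp_all
qed

definition sign_vectors :: "nat \<Rightarrow> real list set" where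
  "sign_vectors m = {\<epsilon>. length \<epsilon> = m \<and> set \<epsilon> \<subseteq> {-1, 1}}"

lemma finite_sign_vectors: "finite (sign_vectors m)"
  unfolding sign_vectors_def using finite_lists_length_eq[of "{-1, 1::real}" m]
  by (simp add: conj_commute)

lemma card_sign_vectors: "card (sign_vectors m) = 2 ^ m"
  unfolding sign_vectors_def using card_lists_length_eq[of "{-1, 1::real}" m]
  by (simp add: conj_commute numeral_2_eq_2)

lemma sign_vectors_Suc: "sign_vectors (Suc m) = (\<lambda>(e, \<epsilon>). e # \<epsilon>) ` ({-1, 1} \<times> sign_vectors m)"
  by (auto simp: sign_vectors_def length_Suc_conv image_iff)

lemma sum_sign_vectors_Suc:
  "(\<Sum>\<epsilon>\<in>sign_vectors (Suc m). F \<epsilon>) = (\<Sum>e\<in>{-1, 1}. \<Sum>\<epsilon>\<in>sign_vectors m. F (e # \<epsilon>))"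
proof -
  have "inj_on (\<lambda>(e, \<epsilon>). e # \<epsilon>) ({-1, 1::real} \<times> sign_vectors m)"
    by (auto simp: inj_on_def)
  then show ?thesis
    unfolding sign_vectors_Suc sum.cartesian_product by (subst sum.reindex) (simp_all add: case_prod_beta)
qed

lemma sum_sign_vectors_exp_le:
  "(\<Sum>\<epsilon>\<in>sign_vectors m. exp (\<Sum>i<m. \<epsilon> ! i * b i)) \<le> 2 ^ m * exp (\<Sum>i<m. (b i)\<^sup>2 / 2)"
proof (induction m arbitrary: b)
  case 0
  have "sign_vectors 0 = {[]}"
    by (auto simp: sign_vectors_def)
  then show ?case
    by simp
next
  case (Suc m)
  let ?S = "\<Sum>\<epsilon>\<in>sign_vectors m. exp (\<Sum>i<m. \<epsilon> ! i * b (Suc i))"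
  have split: "exp (\<Sum>i<Suc m. (e # \<epsilon>) ! i * b i) = exp (e * b 0) * exp (\<Sum>i<m. \<epsilon> ! i * b (Suc i))"
    for e \<epsilon>
    by (simp only: sum.lessThan_Suc_shift) (simp add: exp_add)
  have "(\<Sum>\<epsilon>\<in>sign_vectors (Suc m). exp (\<Sum>i<Suc m. \<epsilon> ! i * b i)) = (exp (- b 0) + exp (b 0)) * ?S"
    unfolding sum_sign_vectors_Suc split by (simp add: sum_distrib_left distrib_right sum.distrib)
  also have "\<dots> = 2 * cosh (b 0) * ?S"
    by (simp add: cosh_field_def)
  also have "\<dots> \<le> 2 * exp ((b 0)\<^sup>2 / 2) * (2 ^ m * exp (\<Sum>i<m. (b (Suc i))\<^sup>2 / 2))"
    using Suc.IH cosh_le_exp_half_square by (intro mult_mono) (auto intro: sum_nonneg)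
  also have "\<dots> = 2 ^ Suc m * exp (\<Sum>i<Suc m. (b i)\<^sup>2 / 2)"
    by (simp only: sum.lessThan_Suc_shift) (simp add: exp_add)
  finally show ?case .
qed

lemma sum_sign_vectors_exp_le_bounded:
  assumes "\<And>i. i < m \<Longrightarrow> \<bar>b i\<bar> \<le> B"
  shows "(\<Sum>\<epsilon>\<in>sign_vectors m. exp (\<Sum>i<m. \<epsilon> ! i * b i)) \<le> 2 ^ m * exp (m * B\<^sup>2 / 2)"
proof -
  have "(b i)\<^sup>2 \<le> B\<^sup>2" if "i < m" for i
    using assms[OF that] by (metis abs_ge_zero power2_abs power_mono)
  then have "(\<Sum>i<m. (b i)\<^sup>2 / 2) \<le> (\<Sum>i<m. B\<^sup>2 / 2)"
    by (intro sum_mono) simp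
  then have "(\<Sum>i<m. (b i)\<^sup>2 / 2) \<le> m * B\<^sup>2 / 2"
    by simp
  then show ?thesis
    using sum_sign_vectors_exp_le[where m = m and b = b] by (meson exp_le_cancel_iff mult_left_mono order_trans zero_le_power zero_le_numeral)
qed

lemma SUP_le_ln_sum_exp:
  fixes f :: "'a \<Rightarrow> real"
  assumes "finite A" "A \<noteq> {}" "c > 0"
  shows "(SUP a\<in>A. f a) \<le> ln (\<Sum>a\<in>A. exp (c * f a)) / c"
proof (rule cSUP_least[OF \<open>A \<noteq> {}\<close>])
  fix a assume "a \<in> A"
  then have "exp (c * f a) \<le> (\<Sum>a\<in>A. exp (c * f a))"
    using \<open>finite A\<close> by (intro member_le_sum) auto
  then have "c * f a \<le> ln (\<Sum>a\<in>A. exp (c * f a))"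
    by (metis exp_gt_zero exp_le_cancel_iff exp_ln order_less_le_trans)
  then show "f a \<le> ln (\<Sum>a\<in>A. exp (c * f a)) / c"
    using \<open>c > 0\<close> by (simp add: le_divide_eq mult.commute)
qed

lemma mean_ln_le_ln_mean:
  fixes Z :: "'a \<Rightarrow> real"
  assumes "finite A" "A \<noteq> {}" "\<And>a. a \<in> A \<Longrightarrow> Z a > 0"
  shows "(\<Sum>a\<in>A. ln (Z a)) / card A \<le> ln ((\<Sum>a\<in>A. Z a) / card A)"
proof -
  have "card A > 0"
    using assms by (simp add: card_gt_0_iff)
  then have "(\<Sum>a\<in>A. 1 / card A * ln (Z a)) \<le> ln (\<Sum>a\<in>A. (1 / card A) *\<^sub>R Z a)"
    using assms by (intro concave_on_sum[OF _ _ ln_concave]) auto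
  then show ?thesis
    by (simp add: sum_divide_distrib)
qed

lemma le_two_sqrt_mult_if_tradeoff:
  fixes A L B :: real
  assumes "L \<ge> 0" "B \<ge> 0" and tradeoff: "\<And>l. l > 0 \<Longrightarrow> A \<le> L / l + l * B"
  shows "A \<le> 2 * sqrt (L * B)"
proof (cases "L > 0 \<and> B > 0")
  case True
  define a b where "a = sqrt L" and "b = sqrt B"
  have "a > 0" "b > 0" "L = a\<^sup>2" "B = b\<^sup>2"
    using True by (simp_all add: a_def b_def)
  then have "a / b > 0" "L / (a / b) = a * b" "a / b * B = a * b" "sqrt (L * B) = a * b"
    by (simp_all add: power2_eq_square real_sqrt_mult)
  then show ?thesis
    using tradeoff[of "a / b"] by simp
next
  case False
  then consider "L = 0" | "B = 0"
    using assms by linarith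
  then have "A \<le> 0"
  proof cases
    case 1
    show ?thesis
    proof (rule field_le_epsilon)
      fix e :: real assume "e > 0"
      then have "A \<le> e / (B + 1) * B"
        using tradeoff[of "e / (B + 1)"] 1 \<open>B \<ge> 0\<close> by simp
      also have "\<dots> \<le> e"
        using \<open>e > 0\<close> \<open>B \<ge> 0\<close> by (simp add: field_simps)
      finally show "A \<le> 0 + e" by simp
    qed
  next
    case 2
    show ?thesis
    proof (rule field_le_epsilon)
      fix e :: real assume "e > 0"
      then have "A \<le> L / ((L + 1) / e)"
        using tradeoff[of "(L + 1) / e"] 2 \<open>L \<ge> 0\<close> by simp
      also have "\<dots> \<le> e"
        using \<open>e > 0\<close> \<open>L \<ge> 0\<close> by (simp add: field_simps)
      finally show "A \<le> 0 + e" by simp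
    qed
  qed
  moreover have "0 \<le> 2 * sqrt (L * B)"
    using assms by simp
  ultimately show ?thesis
    by linarith
qed

lemma emp_rademacher_le_tradeoff:
  fixes G :: "('z \<Rightarrow> real) set" and S :: "'z list"
  assumes "finite G" "G \<noteq> {}" "S \<noteq> []" "l > 0"
    and bound: "\<And>g i. g \<in> G \<Longrightarrow> i < length S \<Longrightarrow> \<bar>g (S ! i)\<bar> \<le> M"
  shows "emp_rademacher G S \<le> ln (card G) / length S / l + l * (M\<^sup>2 / 2)"
proof -
  define m where "m = length S"
  define X where "X g \<epsilon> = (\<Sum>i<m. \<epsilon> ! i * g (S ! i))" for g and \<epsilon> :: "real list"
  define Z where "Z \<epsilon> = (\<Sum>g\<in>G. exp (l * X g \<epsilon>))" for \<epsilon>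
  have "m > 0"
    using \<open>S \<noteq> []\<close> by (simp add: m_def)
  have Z_pos: "Z \<epsilon> > 0" for \<epsilon>
    unfolding Z_def using assms by (intro sum_pos) auto
  have sign_vectors_ne: "sign_vectors m \<noteq> {}"
    using card_sign_vectors[of m] by auto
  have softmax: "(SUP g\<in>G. X g \<epsilon> / m) \<le> ln (Z \<epsilon>) / (l * m)" for \<epsilon>
  proof -
    have "(SUP g\<in>G. X g \<epsilon> / m) \<le> ln (\<Sum>g\<in>G. exp (l * m * (X g \<epsilon> / m))) / (l * m)"
      using assms \<open>m > 0\<close> by (intro SUP_le_ln_sum_exp) auto
    then show ?thesis
      using \<open>m > 0\<close> by (simp add: Z_def)
  qed
  have "emp_rademacher G S = (\<Sum>\<epsilon>\<in>sign_vectors m. (SUP g\<in>G. X g \<epsilon> / m)) / 2 ^ m"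
    unfolding emp_rademacher_def sign_vectors_def X_def m_def by simp
  also have "\<dots> \<le> (\<Sum>\<epsilon>\<in>sign_vectors m. ln (Z \<epsilon>) / (l * m)) / 2 ^ m"
    by (intro divide_right_mono sum_mono softmax) simp
  also have "\<dots> = (\<Sum>\<epsilon>\<in>sign_vectors m. ln (Z \<epsilon>)) / card (sign_vectors m) / (l * m)"
    by (simp add: card_sign_vectors sum_divide_distrib mult_ac)
  also have "\<dots> \<le> ln ((\<Sum>\<epsilon>\<in>sign_vectors m. Z \<epsilon>) / card (sign_vectors m)) / (l * m)"
    using \<open>l > 0\<close> Z_pos finite_sign_vectors sign_vectors_ne
    by (intro divide_right_mono mean_ln_le_ln_mean) auto
  also have "\<dots> \<le> ln (card G * exp (m * (l * M)\<^sup>2 / 2)) / (l * m)"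
  proof (intro divide_right_mono ln_mono)
    have "(\<Sum>\<epsilon>\<in>sign_vectors m. Z \<epsilon>)
        = (\<Sum>g\<in>G. \<Sum>\<epsilon>\<in>sign_vectors m. exp (\<Sum>i<m. \<epsilon> ! i * (l * g (S ! i))))"
      unfolding Z_def X_def by (subst sum.swap) (simp add: sum_distrib_left mult.left_commute)
    also have "\<dots> \<le> (\<Sum>g\<in>G. 2 ^ m * exp (m * (l * M)\<^sup>2 / 2))"
      using bound \<open>l > 0\<close>
      by (intro sum_mono sum_sign_vectors_exp_le_bounded) (simp add: abs_mult m_def)
    finally show "(\<Sum>\<epsilon>\<in>sign_vectors m. Z \<epsilon>) / card (sign_vectors m) \<le> card G * exp (m * (l * M)\<^sup>2 / 2)"
      by (simp add: card_sign_vectors field_simps)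
    show "0 < (\<Sum>\<epsilon>\<in>sign_vectors m. Z \<epsilon>) / card (sign_vectors m)"
      using Z_pos finite_sign_vectors sign_vectors_ne by (intro divide_pos_pos sum_pos) auto
  qed (use \<open>l > 0\<close> \<open>m > 0\<close> in auto)
  also have "\<dots> = ln (card G) / m / l + l * (M\<^sup>2 / 2)"
    using assms \<open>m > 0\<close> by (simp add: ln_mult card_gt_0_iff field_simps power2_eq_square)
  finally show ?thesis
    by (simp add: m_def)
qed

lemma emp_rademacher_finite_class_le:
  fixes G :: "('z \<Rightarrow> real) set" and S :: "'z list"
  assumes "finite G" "G \<noteq> {}" "S \<noteq> []"
    and bound: "\<And>g i. g \<in> G \<Longrightarrow> i < length S \<Longrightarrow> \<bar>g (S ! i)\<bar> \<le> M"
  shows "emp_rademacher G S \<le> M * sqrt (2 * ln (card G)) / sqrt (length S)"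
proof -
  obtain g where "g \<in> G"
    using \<open>G \<noteq> {}\<close> by blast
  then have "M \<ge> 0"
    using bound[of g 0] \<open>S \<noteq> []\<close> by fastforce
  have "card G \<ge> 1"
    using assms by (simp add: Suc_le_eq card_gt_0_iff)
  then have "emp_rademacher G S \<le> 2 * sqrt (ln (card G) / length S * (M\<^sup>2 / 2))"
    using emp_rademacher_le_tradeoff[OF assms(1-3), where M = M] bound
    by (intro le_two_sqrt_mult_if_tradeoff) auto
  also have "\<dots> = sqrt (4 * (ln (card G) / length S * (M\<^sup>2 / 2)))"
    by (simp only: real_sqrt_mult real_sqrt_four)
  also have "\<dots> = sqrt (M\<^sup>2 * (2 * ln (card G)) / length S)"
    by (simp add: field_simps)
  also have "\<dots> = M * sqrt (2 * ln (card G)) / sqrt (length S)"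
    using \<open>M \<ge> 0\<close> by (simp add: real_sqrt_mult real_sqrt_divide)
  finally show ?thesis .
qed

lemma card_bounded_subsets_le:
  assumes "finite A"
  shows "card {B. B \<subseteq> A \<and> card B \<le> k} \<le> (card A + 1) ^ k"
proof -
  let ?L = "{xs. set xs \<subseteq> insert None (Some ` A) \<and> length xs = k}"
  have fin_L: "finite ?L"
    using assms by (intro finite_lists_length_eq) simp
  have "{B. B \<subseteq> A \<and> card B \<le> k} \<subseteq> (\<lambda>xs. Some -` set xs) ` ?L"
  proof
    fix B assume "B \<in> {B. B \<subseteq> A \<and> card B \<le> k}"
    then have "B \<subseteq> A" "card B \<le> k"
      by auto
    then obtain ys where ys: "set ys = B" "distinct ys"
      using assms finite_distinct_list finite_subset by metis
    then have "length ys \<le> k"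
      using \<open>card B \<le> k\<close> distinct_card by metis
    define xs where "xs = map Some ys @ replicate (k - length ys) None"
    have "xs \<in> ?L" "Some -` set xs = B"
      using ys \<open>B \<subseteq> A\<close> \<open>length ys \<le> k\<close> by (auto simp: xs_def)
    then show "B \<in> (\<lambda>xs. Some -` set xs) ` ?L"
      by blast
  qed
  then have "card {B. B \<subseteq> A \<and> card B \<le> k} \<le> card ((\<lambda>xs. Some -` set xs) ` ?L)"
    using fin_L by (intro card_mono) auto
  also have "\<dots> \<le> card ?L"
    using fin_L by (rule card_image_le)
  also have "\<dots> = (card A + 1) ^ k"
    using card_lists_length_eq[of "insert None (Some ` A)" k] assms by (simp add: card_image)
  finally show ?thesis .
qed

lemma card_subsets_bounded_part_le:
  assumes "finite U"
  shows "card {T. T \<subseteq> U \<and> card {x \<in> T. P x} \<le> k}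
    \<le> 2 ^ card {x \<in> U. \<not> P x} * (card {x \<in> U. P x} + 1) ^ k"
proof -
  let ?K = "{B. B \<subseteq> {x \<in> U. P x} \<and> card B \<le> k}"
  have fin_K: "finite ?K"
    by (rule finite_subset[of _ "Pow U"]) (use assms in auto)
  let ?P = "Pow {x \<in> U. \<not> P x} \<times> ?K"
  have fin_P: "finite ?P"
    using assms fin_K by simp
  have "{T. T \<subseteq> U \<and> card {x \<in> T. P x} \<le> k} \<subseteq> (\<lambda>(A, B). A \<union> B) ` ?P"
  proof
    fix T assume T: "T \<in> {T. T \<subseteq> U \<and> card {x \<in> T. P x} \<le> k}"
    have "T = {x \<in> T. \<not> P x} \<union> {x \<in> T. P x}"
      by auto
    moreover have "({x \<in> T. \<not> P x}, {x \<in> T. P x}) \<in> ?P"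
      using T by blast
    ultimately show "T \<in> (\<lambda>(A, B). A \<union> B) ` ?P"
      by (metis (no_types, lifting) case_prod_conv image_eqI)
  qed
  then have "card {T. T \<subseteq> U \<and> card {x \<in> T. P x} \<le> k} \<le> card ((\<lambda>(A, B). A \<union> B) ` ?P)"
    using fin_P by (intro card_mono) auto
  also have "\<dots> \<le> card ?P"
    using fin_P by (rule card_image_le)
  also have "\<dots> = 2 ^ card {x \<in> U. \<not> P x} * card ?K"
    using assms by (simp add: card_cartesian_product card_Pow)
  also have "\<dots> \<le> 2 ^ card {x \<in> U. \<not> P x} * (card {x \<in> U. P x} + 1) ^ k"
    using assms by (intro mult_left_mono card_bounded_subsets_le) auto
  finally show ?thesis .
qed

lemma non_CCZ_gates_subset:
  "{g. valid_gate n g \<and> \<not> is_CCZ g} \<subseteq> Zg ` {..<n} \<union> (\<lambda>(i, j). CZg i j) ` ({..<n} \<times> {..<n})"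
proof
  fix g assume g: "g \<in> {g. valid_gate n g \<and> \<not> is_CCZ g}"
  show "g \<in> Zg ` {..<n} \<union> (\<lambda>(i, j). CZg i j) ` ({..<n} \<times> {..<n})"
  proof (cases g)
    case (CZg i j)
    then show ?thesis
      using g by (auto intro!: image_eqI[where x = "(i, j)"])
  qed (use g in auto)
qed

lemma CCZ_gates_subset:
  "{g. valid_gate n g \<and> is_CCZ g} \<subseteq> (\<lambda>(i, j, l). CCZg i j l) ` ({..<n} \<times> {..<n} \<times> {..<n})"
proof
  fix g assume g: "g \<in> {g. valid_gate n g \<and> is_CCZ g}"
  show "g \<in> (\<lambda>(i, j, l). CCZg i j l) ` ({..<n} \<times> {..<n} \<times> {..<n})"
  proof (cases g)
    case (CCZg i j l)
    then show ?thesis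
      using g by (auto intro!: image_eqI[where x = "(i, j, l)"])
  qed (use g in auto)
qed

lemma card_non_CCZ_gates_le: "card {g. valid_gate n g \<and> \<not> is_CCZ g} \<le> n + n * n"
proof -
  have "card {g. valid_gate n g \<and> \<not> is_CCZ g}
      \<le> card (Zg ` {..<n} \<union> (\<lambda>(i, j). CZg i j) ` ({..<n} \<times> {..<n}))"
    by (intro card_mono non_CCZ_gates_subset) auto
  also have "\<dots> \<le> card (Zg ` {..<n}) + card ((\<lambda>(i, j). CZg i j) ` ({..<n} \<times> {..<n}))"
    by (rule card_Un_le)
  also have "\<dots> \<le> card {..<n} + card ({..<n} \<times> {..<n})"
    by (intro add_mono card_image_le) auto
  finally show ?thesis
    by (simp add: card_cartesian_product)
qed

lemma card_CCZ_gates_le: "card {g. valid_gate n g \<and> is_CCZ g} \<le> n ^ 3"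
proof -
  have "card {g. valid_gate n g \<and> is_CCZ g}
      \<le> card ((\<lambda>(i, j, l). CCZg i j l) ` ({..<n} \<times> {..<n} \<times> {..<n}))"
    by (intro card_mono CCZ_gates_subset) auto
  also have "\<dots> \<le> card ({..<n} \<times> {..<n} \<times> {..<n})"
    by (rule card_image_le) auto
  finally show ?thesis
    by (simp add: card_cartesian_product power3_eq_cube)
qed

lemma finite_valid_gates: "finite {g. valid_gate n g}"
proof -
  have "{g. valid_gate n g} = {g. valid_gate n g \<and> \<not> is_CCZ g} \<union> {g. valid_gate n g \<and> is_CCZ g}"
    by auto
  then show ?thesis
    using finite_subset[OF non_CCZ_gates_subset] finite_subset[OF CCZ_gates_subset] by auto
qed

lemma finite_bv: "finite (bv n)"
  using finite_lists_length_eq[of "UNIV :: bool set" n] by (simp add: bv_def)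

text \<open>Matrices are total functions on bit lists, but \<open>mmult n\<close> and \<open>mtrace n\<close> only see their
  entries indexed by \<open>bv n\<close>; a circuit matrix equals a diagonal sign matrix only on those.\<close>

definition agree_on_bv :: "nat \<Rightarrow> cmat \<Rightarrow> cmat \<Rightarrow> bool" where
  "agree_on_bv n A B \<longleftrightarrow> (\<forall>x\<in>bv n. \<forall>y\<in>bv n. A x y = B x y)"

lemma agree_on_bv_refl: "agree_on_bv n A A"
  by (simp add: agree_on_bv_def)

lemma agree_on_bv_mmult:
  "agree_on_bv n A A' \<Longrightarrow> agree_on_bv n B B' \<Longrightarrow> agree_on_bv n (mmult n A B) (mmult n A' B')"
  unfolding agree_on_bv_def mmult_def by (auto intro!: sum.cong)

lemma agree_on_bv_madj: "agree_on_bv n A A' \<Longrightarrow> agree_on_bv n (madj A) (madj A')"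
  unfolding agree_on_bv_def madj_def by auto

lemma f_chan_unitary_channel_cong:
  assumes "agree_on_bv n U U'"
  shows "f_chan n (unitary_channel n U) = f_chan n (unitary_channel n U')"
proof -
  have "agree_on_bv n (mmult n (unitary_channel n U \<rho>) \<sigma>) (mmult n (unitary_channel n U' \<rho>) \<sigma>)"
    for \<rho> \<sigma>
    unfolding unitary_channel_def
    using assms by (intro agree_on_bv_mmult agree_on_bv_madj agree_on_bv_refl)
  then have "mtrace n (mmult n (unitary_channel n U \<rho>) \<sigma>) = mtrace n (mmult n (unitary_channel n U' \<rho>) \<sigma>)"
    for \<rho> \<sigma>
    unfolding mtrace_def agree_on_bv_def by (auto intro!: sum.cong)
  then show ?thesis
    unfolding f_chan_def by simp
qed

definition sign_diag :: "(bool list \<Rightarrow> bool) \<Rightarrow> cmat" where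
  "sign_diag d = diag_mat (\<lambda>z. if d z then -1 else 1)"

lemma circuit_mat_agree_on_bv:
  "agree_on_bv n (circuit_mat n gs) (sign_diag (\<lambda>z. odd (length (filter (\<lambda>g. gate_phase g z) gs))))"
proof (induction gs)
  case Nil
  then show ?case
    by (simp add: agree_on_bv_def circuit_mat_def sign_diag_def)
next
  case (Cons g gs)
  let ?D = "sign_diag (\<lambda>z. odd (length (filter (\<lambda>g. gate_phase g z) gs)))"
  have "circuit_mat n (g # gs) x y = gate_mat g x x * ?D x y" if "x \<in> bv n" "y \<in> bv n" for x y
  proof -
    have "circuit_mat n (g # gs) x y = (\<Sum>z\<in>bv n. gate_mat g x z * ?D z y)"
      using Cons.IH that by (auto simp: circuit_mat_def mmult_def agree_on_bv_def intro!: sum.cong)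
    also have "\<dots> = (\<Sum>z\<in>bv n. if z = x then gate_mat g x x * ?D x y else 0)"
      by (intro sum.cong) (auto simp: gate_mat_def diag_mat_def)
    finally show ?thesis
      using that finite_bv by simp
  qed
  then show ?case
    by (auto simp: agree_on_bv_def gate_mat_def diag_mat_def sign_diag_def)
qed

definition odd_occurrences :: "'a list \<Rightarrow> 'a set" where
  "odd_occurrences xs = {x \<in> set xs. odd (count_list xs x)}"

lemma odd_length_filter_iff:
  "odd (length (filter P xs)) \<longleftrightarrow> odd (card {x \<in> odd_occurrences xs. P x})"
proof -
  have "count_list (filter P xs) x = (if P x then count_list xs x else 0)" for x
    by (induction xs) auto
  then have "length (filter P xs) = (\<Sum>x\<in>set xs. if P x then count_list xs x else 0)"
    using sum_count_set[of "filter P xs" "set xs"] by simp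
  then have "odd (length (filter P xs))
      \<longleftrightarrow> odd (card {x \<in> set xs. odd (if P x then count_list xs x else 0)})"
    by (simp only: even_sum_iff[OF finite_set])
  also have "{x \<in> set xs. odd (if P x then count_list xs x else 0)} = {x \<in> odd_occurrences xs. P x}"
    by (auto simp: odd_occurrences_def)
  finally show ?thesis .
qed

definition f_gate_set :: "nat \<Rightarrow> gate set \<Rightarrow> bool list \<times> bool list \<Rightarrow> real" where
  "f_gate_set n T = f_chan n (unitary_channel n
     (mmult n (mmult n (hadamard_n n) (sign_diag (\<lambda>z. odd (card {g \<in> T. gate_phase g z})))) (hadamard_n n)))"

lemma F_class_I_CCZ_subset:
  "F_class n (I_CCZ n k) \<subseteq> f_gate_set n ` {T. T \<subseteq> {g. valid_gate n g} \<and> card {g \<in> T. is_CCZ g} \<le> k}"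
proof
  fix f assume "f \<in> F_class n (I_CCZ n k)"
  then obtain gs where gs: "\<forall>g\<in>set gs. valid_gate n g" "length (filter is_CCZ gs) \<le> k"
    and f: "f = f_chan n (unitary_channel n
      (mmult n (mmult n (hadamard_n n) (circuit_mat n gs)) (hadamard_n n)))"
    unfolding F_class_def I_CCZ_def by blast
  have "f = f_gate_set n (odd_occurrences gs)"
    unfolding f f_gate_set_def odd_length_filter_iff[symmetric]
    by (intro f_chan_unitary_channel_cong agree_on_bv_mmult agree_on_bv_refl circuit_mat_agree_on_bv)
  moreover have "card {g \<in> odd_occurrences gs. is_CCZ g} \<le> length (filter is_CCZ gs)"
  proof -
    have "card {g \<in> odd_occurrences gs. is_CCZ g} \<le> card (set (filter is_CCZ gs))"
      by (intro card_mono) (auto simp: odd_occurrences_def)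
    also have "\<dots> \<le> length (filter is_CCZ gs)"
      by (rule card_length)
    finally show ?thesis .
  qed
  moreover have "odd_occurrences gs \<subseteq> {g. valid_gate n g}"
    using gs(1) by (auto simp: odd_occurrences_def)
  ultimately show "f \<in> f_gate_set n ` {T. T \<subseteq> {g. valid_gate n g} \<and> card {g \<in> T. is_CCZ g} \<le> k}"
    using gs(2) by auto
qed

lemma finite_F_class_I_CCZ: "finite (F_class n (I_CCZ n k))"
  using finite_valid_gates by (intro finite_subset[OF F_class_I_CCZ_subset]) auto

lemma F_class_I_CCZ_nonempty: "F_class n (I_CCZ n k) \<noteq> {}"
  unfolding F_class_def I_CCZ_def by (auto intro!: exI[of _ "[]"])

lemma card_F_class_I_CCZ_le: "card (F_class n (I_CCZ n k)) \<le> 2 ^ (n + n * n) * (n ^ 3 + 1) ^ k"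
proof -
  let ?V = "{g. valid_gate n g}"
  have "card (F_class n (I_CCZ n k)) \<le> card {T. T \<subseteq> ?V \<and> card {g \<in> T. is_CCZ g} \<le> k}"
    using finite_valid_gates
    by (intro card_mono[OF _ F_class_I_CCZ_subset, THEN order_trans] card_image_le) auto
  also have "\<dots> \<le> 2 ^ card {g \<in> ?V. \<not> is_CCZ g} * (card {g \<in> ?V. is_CCZ g} + 1) ^ k"
    using finite_valid_gates by (rule card_subsets_bounded_part_le)
  also have "\<dots> \<le> 2 ^ (n + n * n) * (n ^ 3 + 1) ^ k"
    using card_non_CCZ_gates_le card_CCZ_gates_le
    by (intro mult_mono power_increasing power_mono) auto
  finally show ?thesis .
qed

lemma ln_gate_count_le:
  assumes "n \<ge> 2"
  shows "ln (real (2 ^ (n + n * n) * (n ^ 3 + 1) ^ k)) \<le> 4 * (real n ^ 2 + real k * ln (real n))"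
proof -
  have n: "real n \<ge> 2"
    using assms by simp
  have "1 * 1 \<le> real n ^ 3 * (real n - 1)"
    using n by (intro mult_mono one_le_power) auto
  then have "real n ^ 3 + 1 \<le> real n ^ 4"
    by (simp add: algebra_simps eval_nat_numeral)
  moreover have cube_pos: "real n ^ 3 + 1 > 0"
    by (intro add_nonneg_pos) auto
  ultimately have "ln (real n ^ 3 + 1) \<le> ln (real n ^ 4)"
    by (rule ln_mono)
  also have "\<dots> = 4 * ln (real n)"
    using n by (simp add: ln_realpow)
  finally have ln_cube: "ln (real n ^ 3 + 1) \<le> 4 * ln (real n)" .
  have "ln (2::real) \<le> 1"
    using ln_le_minus_one[of 2] by simp
  have "real n \<le> real n * real n"
    using n by simp
  have "ln (real (2 ^ (n + n * n) * (n ^ 3 + 1) ^ k))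
      = real (n + n * n) * ln 2 + real k * ln (real n ^ 3 + 1)"
    using cube_pos by (simp add: ln_mult ln_realpow)
  also have "\<dots> \<le> real (n + n * n) * 1 + real k * (4 * ln (real n))"
    using \<open>ln 2 \<le> 1\<close> ln_cube by (intro add_mono mult_left_mono) auto
  also have "\<dots> \<le> 4 * (real n ^ 2 + real k * ln (real n))"
    using \<open>real n \<le> real n * real n\<close> by (simp add: power2_eq_square algebra_simps)
  finally show ?thesis .
qed

lemma ln_card_F_class_I_CCZ_le:
  assumes "n \<ge> 2"
  shows "ln (card (F_class n (I_CCZ n k))) \<le> 4 * (real n ^ 2 + real k * ln (real n))"
proof -
  have "card (F_class n (I_CCZ n k)) > 0"
    using finite_F_class_I_CCZ F_class_I_CCZ_nonempty by (simp add: card_gt_0_iff)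
  then have "ln (card (F_class n (I_CCZ n k))) \<le> ln (real (2 ^ (n + n * n) * (n ^ 3 + 1) ^ k))"
    using card_F_class_I_CCZ_le by (intro ln_mono) (simp_all only: of_nat_le_iff of_nat_0_less_iff)
  also have "\<dots> \<le> 4 * (real n ^ 2 + real k * ln (real n))"
    using assms by (rule ln_gate_count_le)
  finally show ?thesis .
qed

theorem mainTheorem9:
  shows "\<exists>C::real. \<forall>n k. \<forall>S :: (bool list \<times> bool list) list.
     n \<ge> 2 \<longrightarrow> length S \<ge> 1 \<longrightarrow> set S \<subseteq> bv n \<times> bv n \<longrightarrow>
     emp_rademacher (F_class n (I_CCZ n k)) S
       \<le> C * sqrt (real n ^ 2 + real k * ln (real n)) / sqrt (real (length S))
           * (SUP \<Phi>\<in>I_CCZ n k. Max ((\<lambda>i. \<bar>f_chan n \<Phi> (S ! i)\<bar>) ` {..<length S}))"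
proof (intro exI[of _ 3] allI impI)
  fix n k :: nat and S :: "(bool list \<times> bool list) list"
  assume "n \<ge> 2" and "length S \<ge> 1"
    and "set S \<subseteq> bv n \<times> bv n" \<comment> \<open>not needed: the bound holds for every sample\<close>
  define G where "G = F_class n (I_CCZ n k)"
  define M where "M = (SUP g\<in>G. Max ((\<lambda>i. \<bar>g (S ! i)\<bar>) ` {..<length S}))"
  define X where "X = real n ^ 2 + real k * ln (real n)"
  have "S \<noteq> []"
    using \<open>length S \<ge> 1\<close> by auto
  have bound: "\<bar>g (S ! i)\<bar> \<le> M" if "g \<in> G" "i < length S" for g i
    unfolding M_def using that finite_F_class_I_CCZ
    by (intro cSUP_upper2[where x = g] Max_ge) (auto simp: G_def)
  have "g \<in> G \<Longrightarrow> M \<ge> 0" for g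
    using bound[of g 0] \<open>S \<noteq> []\<close> by fastforce
  then have "M \<ge> 0"
    using F_class_I_CCZ_nonempty unfolding G_def by blast
  have "ln (card G) \<le> 4 * X"
    unfolding G_def X_def using \<open>n \<ge> 2\<close> by (rule ln_card_F_class_I_CCZ_le)
  moreover have "X \<ge> 0"
    unfolding X_def using \<open>n \<ge> 2\<close> by simp
  ultimately have sqrt_ln_card: "sqrt (2 * ln (card G)) \<le> sqrt (3\<^sup>2 * X)"
    by simp
  have "emp_rademacher G S \<le> M * sqrt (2 * ln (card G)) / sqrt (length S)"
    using finite_F_class_I_CCZ F_class_I_CCZ_nonempty \<open>S \<noteq> []\<close> bound
    unfolding G_def by (intro emp_rademacher_finite_class_le) auto
  also have "\<dots> \<le> 3 * sqrt X / sqrt (length S) * M"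
    using sqrt_ln_card \<open>M \<ge> 0\<close> by (simp add: real_sqrt_mult divide_right_mono mult_left_mono mult.commute)
  also have "M = (SUP \<Phi>\<in>I_CCZ n k. Max ((\<lambda>i. \<bar>f_chan n \<Phi> (S ! i)\<bar>) ` {..<length S}))"
    unfolding M_def G_def F_class_def by (simp add: image_image)
  finally show "emp_rademacher (F_class n (I_CCZ n k)) S
       \<le> 3 * sqrt (real n ^ 2 + real k * ln (real n)) / sqrt (real (length S))
           * (SUP \<Phi>\<in>I_CCZ n k. Max ((\<lambda>i. \<bar>f_chan n \<Phi> (S ! i)\<bar>) ` {..<length S}))"
    unfolding G_def X_def .
qed

end
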